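(* Let $n, I, J_0, J_1, \dots, J_I$ be positive integers, let $P \subseteq \mathbb{R}^n$ be a closed convex set, let $c:\mathbb{R}^n \to \mathbb{R}$ and $\phi_{ij}:\mathbb{R}^n\to\mathbb{R}$ ($i=0,\dots,I$, $j=1,\dots,J_i$) be continuous functions, let $A\in\mathbb{R}^{I\times n}$ with rows $A_{i\bullet}$, let $\eta\in\mathbb{R}^I$, and let $\psi_{ij}\in\mathbb{R}$, with $\psi_{ij}^{\pm} = \max(\pm\psi_{ij},0)$. Define $$\theta(x) = c(x) + \sum_{j=1}^{J_0}\psi_{0j}\,\mathbf{1}_{[0,\infty)}(\phi_{0j}(x)),\qquad X_{\rm AHS} = \Big\{x\in P : A_{i\bullet}x + \sum_{j=1}^{J_i}\psi_{ij}\,\mathbf{1}_{[0,\infty)}(\phi_{ij}(x)) \ge \eta_i,\ i=1,\dots,I\Big\},$$ and for $\varepsilon>0$ $$\theta^{\varepsilon}(x) = c(x) + \sum_{j=1}^{J_0}\psi_{0j}^+\,\mathbf{1}_{[0,\infty)}(\phi_{0j}(x)) - \sum_{j=1}^{J_0}\psi_{0j}^-\,\mathbf{1}_{(-\varepsilon,\infty)}(\phi_{0j}(x)),$$ $$X_{\rm AHS}^{\varepsilon} = \Big\{x\in P : A_{i\bullet}x + \sum_{j=1}^{J_i}\psi_{ij}^+\,\mathbf{1}_{[0,\infty)}(\phi_{ij}(x)) - \sum_{j=1}^{J_i}\psi_{ij}^-\,\mathbf{1}_{(-\varepsilon,\infty)}(\phi_{ij}(x)) \ge \eta_i,\ i=1,\dots,I\Big\}.$$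 Suppose that $\sup_{x\in X_{\rm AHS}}\theta(x)$ is finite (in particular $X_{\rm AHS}\neq\emptyset$). Then $$\sup_{x\in X_{\rm AHS}}\theta(x) = \lim_{\varepsilon\downarrow 0}\ \sup_{x\in X^{\varepsilon}_{\rm AHS}}\theta^{\varepsilon}(x) = \sup_{\varepsilon>0}\ \sup_{x\in X^{\varepsilon}_{\rm AHS}}\theta^{\varepsilon}(x).$$ Furthermore, if $\sup_{x\in X_{\rm AHS}}\theta(x)$ is attained at some $x^*\in X_{\rm AHS}$, then there exists $\varepsilon_*>0$ such that $x^*$ is a maximizer of $\theta^{\varepsilon}$ on $X^{\varepsilon}_{\rm AHS}$ for all $\varepsilon\in(0,\varepsilon_*]$.
   Context: $\mathbf{1}_S$ denotes the indicator function of a set $S\subseteq\mathbb{R}$ (equal to $1$ on $S$ and $0$ elsewhere). The supremum over an empty set is $-\infty$. *)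

theory Defs
  imports "HOL-Analysis.Analysis"
begin

text \<open>Vectors of R^n are rendered as real^'n; the rows A_i of the matrix A are
  vectors A i (i = 1..I), so A_i x is the inner product A i \<bullet> x.
  Index i = 0 refers to the objective, i = 1..I to the constraints; j = 1..J i.\<close>

definition pos_part :: "real \<Rightarrow> real" where
  "pos_part t = max t 0"

definition neg_part :: "real \<Rightarrow> real" where
  "neg_part t = max (- t) 0"

definition theta ::
  "(real^'n \<Rightarrow> real) \<Rightarrow> (nat \<Rightarrow> nat) \<Rightarrow> (nat \<Rightarrow> nat \<Rightarrow> real)
   \<Rightarrow> (nat \<Rightarrow> nat \<Rightarrow> real^'n \<Rightarrow> real) \<Rightarrow> real^'n \<Rightarrow> real" where
  "theta c J psi phi x =
     c x + (\<Sum>j = 1..J 0. psi 0 j * indicator {0..} (phi 0 j x))"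

definition X_AHS ::
  "(real^'n) set \<Rightarrow> nat \<Rightarrow> (nat \<Rightarrow> real^'n) \<Rightarrow> (nat \<Rightarrow> real) \<Rightarrow> (nat \<Rightarrow> nat)
   \<Rightarrow> (nat \<Rightarrow> nat \<Rightarrow> real) \<Rightarrow> (nat \<Rightarrow> nat \<Rightarrow> real^'n \<Rightarrow> real) \<Rightarrow> (real^'n) set" where
  "X_AHS P I A eta J psi phi =
     {x \<in> P. \<forall>i \<in> {1..I}.
        A i \<bullet> x + (\<Sum>j = 1..J i. psi i j * indicator {0..} (phi i j x)) \<ge> eta i}"

definition theta_eps ::
  "real \<Rightarrow> (real^'n \<Rightarrow> real) \<Rightarrow> (nat \<Rightarrow> nat) \<Rightarrow> (nat \<Rightarrow> nat \<Rightarrow> real)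
   \<Rightarrow> (nat \<Rightarrow> nat \<Rightarrow> real^'n \<Rightarrow> real) \<Rightarrow> real^'n \<Rightarrow> real" where
  "theta_eps \<epsilon> c J psi phi x =
     c x + (\<Sum>j = 1..J 0. pos_part (psi 0 j) * indicator {0..} (phi 0 j x))
         - (\<Sum>j = 1..J 0. neg_part (psi 0 j) * indicator {-\<epsilon><..} (phi 0 j x))"

definition X_AHS_eps ::
  "real \<Rightarrow> (real^'n) set \<Rightarrow> nat \<Rightarrow> (nat \<Rightarrow> real^'n) \<Rightarrow> (nat \<Rightarrow> real) \<Rightarrow> (nat \<Rightarrow> nat)
   \<Rightarrow> (nat \<Rightarrow> nat \<Rightarrow> real) \<Rightarrow> (nat \<Rightarrow> nat \<Rightarrow> real^'n \<Rightarrow> real) \<Rightarrow> (real^'n) set" where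
  "X_AHS_eps \<epsilon> P I A eta J psi phi =
     {x \<in> P. \<forall>i \<in> {1..I}.
        A i \<bullet> x + (\<Sum>j = 1..J i. pos_part (psi i j) * indicator {0..} (phi i j x))
                - (\<Sum>j = 1..J i. neg_part (psi i j) * indicator {-\<epsilon><..} (phi i j x)) \<ge> eta i}"

text \<open>Supremum in the extended reals (Sup of the empty set is -\<infinity>).\<close>
definition esup :: "('a \<Rightarrow> real) \<Rightarrow> 'a set \<Rightarrow> ereal" where
  "esup f S = (SUP x\<in>S. ereal (f x))"

end

theory Submission
  imports Defs
begin

text \<open>For \<open>\<epsilon> > 0\<close> the indicator of \<open>(-\<epsilon>, \<infinity>)\<close> dominates that of \<open>[0, \<infinity>)\<close>, and the relaxation uses
  the larger indicator only in terms entering with a nonpositive coefficient; hence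
  \<open>X\<^sup>\<epsilon> \<subseteq> X\<close> and \<open>\<theta>\<^sup>\<epsilon> \<le> \<theta>\<close>. Conversely, at a fixed point \<open>x\<close> both indicators agree on each of
  the finitely many values \<open>\<phi>\<^sub>i\<^sub>j(x)\<close> once \<open>\<epsilon>\<close> is smaller than every \<open>|\<phi>\<^sub>i\<^sub>j(x)|\<close> with
  \<open>\<phi>\<^sub>i\<^sub>j(x) < 0\<close>, so \<open>x \<in> X\<^sup>\<epsilon>\<close> and \<open>\<theta>\<^sup>\<epsilon>(x) = \<theta>(x)\<close> for all small \<open>\<epsilon>\<close>. These two facts alone give all
  claims.\<close>

locale eventually_exact_underapprox =
  fixes X :: "'a set" and f :: "'a \<Rightarrow> 'b :: {complete_linorder, linorder_topology}"
    and Y :: "real \<Rightarrow> 'a set" and g :: "real \<Rightarrow> 'a \<Rightarrow> 'b"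
  assumes subset: "\<epsilon> > 0 \<Longrightarrow> Y \<epsilon> \<subseteq> X"
    and below: "\<epsilon> > 0 \<Longrightarrow> y \<in> Y \<epsilon> \<Longrightarrow> g \<epsilon> y \<le> f y"
    and eventually_exact: "x \<in> X \<Longrightarrow> eventually (\<lambda>\<epsilon>. x \<in> Y \<epsilon> \<and> g \<epsilon> x = f x) (at_right 0)"
begin

lemma SUP_le: "\<epsilon> > 0 \<Longrightarrow> (SUP y\<in>Y \<epsilon>. g \<epsilon> y) \<le> (SUP x\<in>X. f x)"
  using subset below by (blast intro: SUP_mono)

lemma le_eventually_SUP: "x \<in> X \<Longrightarrow> eventually (\<lambda>\<epsilon>. f x \<le> (SUP y\<in>Y \<epsilon>. g \<epsilon> y)) (at_right 0)"
  by (erule eventually_mono[OF eventually_exact]) (metis SUP_upper)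

lemma tendsto_SUP: "((\<lambda>\<epsilon>. SUP y\<in>Y \<epsilon>. g \<epsilon> y) \<longlongrightarrow> (SUP x\<in>X. f x)) (at_right 0)"
proof (rule order_tendstoI)
  fix a assume "a < (SUP x\<in>X. f x)"
  then obtain x where "x \<in> X" "a < f x"
    by (auto simp: less_SUP_iff)
  then show "eventually (\<lambda>\<epsilon>. a < (SUP y\<in>Y \<epsilon>. g \<epsilon> y)) (at_right 0)"
    by (auto elim: eventually_mono[OF le_eventually_SUP] intro: less_le_trans)
next
  fix a assume "(SUP x\<in>X. f x) < a"
  then have "\<epsilon> > 0 \<Longrightarrow> (SUP y\<in>Y \<epsilon>. g \<epsilon> y) < a" for \<epsilon>
    using SUP_le by (rule le_less_trans[rotated])
  then show "eventually (\<lambda>\<epsilon>. (SUP y\<in>Y \<epsilon>. g \<epsilon> y) < a) (at_right 0)"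
    by (simp add: eventually_at_filter)
qed

lemma SUP_eq_SUP_SUP: "(SUP x\<in>X. f x) = (SUP \<epsilon>\<in>{0<..}. SUP y\<in>Y \<epsilon>. g \<epsilon> y)"
proof (rule antisym)
  show "(SUP x\<in>X. f x) \<le> (SUP \<epsilon>\<in>{0<..}. SUP y\<in>Y \<epsilon>. g \<epsilon> y)"
  proof (rule SUP_least)
    fix x assume "x \<in> X"
    then have "eventually (\<lambda>\<epsilon>. \<epsilon> > 0 \<and> f x \<le> (SUP y\<in>Y \<epsilon>. g \<epsilon> y)) (at_right 0)"
      by (intro eventually_conj eventually_at_right_less le_eventually_SUP)
    then obtain \<epsilon> where "\<epsilon> > 0" "f x \<le> (SUP y\<in>Y \<epsilon>. g \<epsilon> y)"
      by (auto dest: eventually_happens'[OF trivial_limit_at_right_real])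
    then show "f x \<le> (SUP \<epsilon>\<in>{0<..}. SUP y\<in>Y \<epsilon>. g \<epsilon> y)"
      by (auto intro: SUP_upper2)
  qed
  show "(SUP \<epsilon>\<in>{0<..}. SUP y\<in>Y \<epsilon>. g \<epsilon> y) \<le> (SUP x\<in>X. f x)"
    by (rule SUP_least) (simp add: SUP_le)
qed

lemma maximizer_eventually_maximizer:
  assumes "x \<in> X" and "f x = (SUP x\<in>X. f x)"
  shows "\<exists>\<epsilon>\<^sub>0>0. \<forall>\<epsilon>\<in>{0<..\<epsilon>\<^sub>0}. x \<in> Y \<epsilon> \<and> (\<forall>y\<in>Y \<epsilon>. g \<epsilon> y \<le> g \<epsilon> x)"
proof -
  obtain b where b: "b > 0" "\<And>\<epsilon>. 0 < \<epsilon> \<Longrightarrow> \<epsilon> < b \<Longrightarrow> x \<in> Y \<epsilon> \<and> g \<epsilon> x = f x"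
    using eventually_exact[OF \<open>x \<in> X\<close>] by (auto simp: eventually_at_right_field)
  have "g \<epsilon> y \<le> g \<epsilon> x" if "0 < \<epsilon>" "\<epsilon> < b" "y \<in> Y \<epsilon>" for \<epsilon> y
  proof -
    have "g \<epsilon> y \<le> f y" using below that(1,3) .
    also have "\<dots> \<le> f x"
      unfolding assms(2) using subset[OF that(1)] that(3) by (blast intro: SUP_upper)
    finally show ?thesis using b that by simp
  qed
  then show ?thesis
    using b by (intro exI[of _ "b/2"]) auto
qed

end

lemma pos_part_minus_neg_part: "pos_part t - neg_part t = t"
  by (simp add: pos_part_def neg_part_def)

lemma relaxed_sum_le:
  fixes t :: "'a \<Rightarrow> real"
  assumes "\<epsilon> > 0"
  shows "(\<Sum>j\<in>S. pos_part (q j) * indicator {0..} (t j))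
           - (\<Sum>j\<in>S. neg_part (q j) * indicator {-\<epsilon><..} (t j))
         \<le> (\<Sum>j\<in>S. q j * indicator {0..} (t j))"
proof -
  have "pos_part (q j) * indicator {0..} (t j) - neg_part (q j) * indicator {-\<epsilon><..} (t j)
        \<le> q j * indicator {0..} (t j)" for j
  proof -
    have "neg_part (q j) * indicator {0..} (t j) \<le> neg_part (q j) * (indicator {-\<epsilon><..} (t j) :: real)"
      using assms by (intro mult_left_mono) (auto simp: indicator_def neg_part_def)
    moreover have "q j * indicator {0..} (t j)
        = pos_part (q j) * indicator {0..} (t j) - neg_part (q j) * (indicator {0..} (t j) :: real)"
      by (simp add: left_diff_distrib[symmetric] pos_part_minus_neg_part)
    ultimately show ?thesis
      by linarith
  qed
  then show ?thesis
    by (simp add: sum_subtractf[symmetric] sum_mono)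
qed

lemma eventually_indicator_greaterThan_eq:
  "eventually (\<lambda>\<epsilon>. indicator {-\<epsilon><..} t = (indicator {0..} (t :: real) :: real)) (at_right 0)"
proof (cases "t \<ge> 0")
  case True
  then show ?thesis
    by (auto simp: eventually_at_right_field indicator_def intro: exI[of _ 1])
next
  case False
  then show ?thesis
    by (auto simp: eventually_at_right_field indicator_def intro: exI[of _ "-t"])
qed

lemma eventually_relaxed_sum_eq:
  fixes t :: "'a \<Rightarrow> real"
  assumes "finite S"
  shows "eventually (\<lambda>\<epsilon>. (\<Sum>j\<in>S. pos_part (q j) * indicator {0..} (t j))
                         - (\<Sum>j\<in>S. neg_part (q j) * indicator {-\<epsilon><..} (t j))
                       = (\<Sum>j\<in>S. q j * indicator {0..} (t j))) (at_right 0)"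
proof -
  have "eventually (\<lambda>\<epsilon>. \<forall>j\<in>S. indicator {-\<epsilon><..} (t j) = (indicator {0..} (t j) :: real)) (at_right 0)"
    using assms by (intro eventually_ball_finite ballI eventually_indicator_greaterThan_eq)
  then show ?thesis
    by eventually_elim
      (simp add: sum_subtractf[symmetric] left_diff_distrib[symmetric] pos_part_minus_neg_part)
qed

lemma theta_eps_le_theta: "\<epsilon> > 0 \<Longrightarrow> theta_eps \<epsilon> c J psi phi x \<le> theta c J psi phi x"
  using relaxed_sum_le[of \<epsilon> "psi 0" "\<lambda>j. phi 0 j x" "{1..J 0}"]
  by (simp add: theta_eps_def theta_def)

lemma eventually_theta_eps_eq:
  "eventually (\<lambda>\<epsilon>. theta_eps \<epsilon> c J psi phi x = theta c J psi phi x) (at_right 0)"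
  using eventually_relaxed_sum_eq[of "{1..J 0}" "psi 0" "\<lambda>j. phi 0 j x"]
  by (simp add: theta_eps_def theta_def)

lemma X_AHS_eps_subset: "\<epsilon> > 0 \<Longrightarrow> X_AHS_eps \<epsilon> P I A eta J psi phi \<subseteq> X_AHS P I A eta J psi phi"
proof (unfold X_AHS_eps_def X_AHS_def, intro Collect_mono conj_mono ballI impI)
  fix x i assume "\<epsilon> > 0" and "\<forall>i\<in>{1..I}. eta i \<le> A i \<bullet> x
      + (\<Sum>j = 1..J i. pos_part (psi i j) * indicator {0..} (phi i j x))
      - (\<Sum>j = 1..J i. neg_part (psi i j) * indicator {-\<epsilon><..} (phi i j x))" and "i \<in> {1..I}"
  then show "eta i \<le> A i \<bullet> x + (\<Sum>j = 1..J i. psi i j * indicator {0..} (phi i j x))"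
    using relaxed_sum_le[of \<epsilon> "psi i" "\<lambda>j. phi i j x" "{1..J i}"] by fastforce
qed

lemma eventually_mem_X_AHS_eps:
  assumes "x \<in> X_AHS P I A eta J psi phi"
  shows "eventually (\<lambda>\<epsilon>. x \<in> X_AHS_eps \<epsilon> P I A eta J psi phi) (at_right 0)"
proof -
  have "eventually (\<lambda>\<epsilon>. \<forall>i\<in>{1..I}.
          (\<Sum>j = 1..J i. pos_part (psi i j) * indicator {0..} (phi i j x))
            - (\<Sum>j = 1..J i. neg_part (psi i j) * indicator {-\<epsilon><..} (phi i j x))
          = (\<Sum>j = 1..J i. psi i j * indicator {0..} (phi i j x))) (at_right 0)"
    by (intro eventually_ball_finite ballI eventually_relaxed_sum_eq) simp_all
  then show ?thesis
    by eventually_elim (use assms in \<open>simp add: X_AHS_def X_AHS_eps_def add_diff_eq[symmetric]\<close>)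
qed

theorem proposition2:
  fixes P :: "(real^'n) set"
    and I :: nat and J :: "nat \<Rightarrow> nat"
    and c :: "real^'n \<Rightarrow> real"
    and phi :: "nat \<Rightarrow> nat \<Rightarrow> real^'n \<Rightarrow> real"
    and A :: "nat \<Rightarrow> real^'n"
    and eta :: "nat \<Rightarrow> real"
    and psi :: "nat \<Rightarrow> nat \<Rightarrow> real"
  assumes I_pos: "I > 0"
    and J_pos: "\<forall>i \<le> I. J i > 0"
    and P_closed: "closed P" and P_convex: "convex P"
    and c_cont: "continuous_on UNIV c"
    and phi_cont: "\<forall>i \<le> I. \<forall>j \<in> {1..J i}. continuous_on UNIV (phi i j)"
    and finite_sup: "esup (theta c J psi phi) (X_AHS P I A eta J psi phi) \<noteq> \<infinity>"
                    "esup (theta c J psi phi) (X_AHS P I A eta J psi phi) \<noteq> -\<infinity>"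
  shows "((\<lambda>\<epsilon>. esup (theta_eps \<epsilon> c J psi phi) (X_AHS_eps \<epsilon> P I A eta J psi phi))
            \<longlongrightarrow> esup (theta c J psi phi) (X_AHS P I A eta J psi phi)) (at_right 0)
       \<and> esup (theta c J psi phi) (X_AHS P I A eta J psi phi)
           = (SUP \<epsilon>\<in>{0<..}. esup (theta_eps \<epsilon> c J psi phi) (X_AHS_eps \<epsilon> P I A eta J psi phi))
       \<and> (\<forall>xs. xs \<in> X_AHS P I A eta J psi phi
               \<and> ereal (theta c J psi phi xs) = esup (theta c J psi phi) (X_AHS P I A eta J psi phi)
            \<longrightarrow> (\<exists>\<epsilon>s>0. \<forall>\<epsilon>\<in>{0<..\<epsilon>s}.
                   xs \<in> X_AHS_eps \<epsilon> P I A eta J psi phi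
                   \<and> (\<forall>y \<in> X_AHS_eps \<epsilon> P I A eta J psi phi.
                        theta_eps \<epsilon> c J psi phi y \<le> theta_eps \<epsilon> c J psi phi xs)))"
proof -
  interpret eventually_exact_underapprox "X_AHS P I A eta J psi phi" "\<lambda>x. ereal (theta c J psi phi x)"
    "\<lambda>\<epsilon>. X_AHS_eps \<epsilon> P I A eta J psi phi" "\<lambda>\<epsilon> x. ereal (theta_eps \<epsilon> c J psi phi x)"
  proof
    show "X_AHS_eps \<epsilon> P I A eta J psi phi \<subseteq> X_AHS P I A eta J psi phi" if "\<epsilon> > 0" for \<epsilon>
      using that by (rule X_AHS_eps_subset)
    show "ereal (theta_eps \<epsilon> c J psi phi y) \<le> ereal (theta c J psi phi y)" if "\<epsilon> > 0" for \<epsilon> y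
      using that by (simp add: theta_eps_le_theta)
    show "eventually (\<lambda>\<epsilon>. x \<in> X_AHS_eps \<epsilon> P I A eta J psi phi
            \<and> ereal (theta_eps \<epsilon> c J psi phi x) = ereal (theta c J psi phi x)) (at_right 0)"
      if "x \<in> X_AHS P I A eta J psi phi" for x
      using eventually_conj[OF eventually_mem_X_AHS_eps[OF that] eventually_theta_eps_eq] by simp
  qed
  show ?thesis
    unfolding esup_def
    using tendsto_SUP SUP_eq_SUP_SUP maximizer_eventually_maximizer by auto
qed

end
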